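(* For any diagonal section $\delta$ and all $x,y\in[0,1]$, $$\overline{C}_\delta(x,y)=\min\left\{x,\;y,\;\max\{x,y\}-\frac12\left(\widehat{\delta}(x)+\widehat{\delta}(y)+\mathrm{TV}_{\min\{x,y\}}^{\max\{x,y\}}(\widehat{\delta})\right)\right\}.$$
   Context: $\mathbb{I}=[0,1]$. A (bivariate) copula is a function $C\colon\mathbb{I}^2\to\mathbb{I}$ with $C(x,0)=C(0,y)=0$, $C(x,1)=x$, $C(1,y)=y$ for all $x,y$, and $C(b,d)+C(a,c)-C(b,c)-C(a,d)\ge 0$ for all $a\le b$, $c\le d$. A diagonal section is a function $\delta\colon\mathbb{I}\to\mathbb{I}$ with $\delta(x)\le x$ for all $x$, $0\le\delta(y)-\delta(x)\le 2(y-x)$ whenever $x\le y$, and $\delta(1)=1$. Write $\widehat{\delta}(x)=x-\delta(x)$, and $\mathrm{TV}_x^y(f)$ for the total variation of $f$ on $[x,y]$ ($x\le y$). Define $\overline{C}_\delta(x,y)=\sup\{C(x,y): C \text{ a copula with } C(t,t)=\delta(t)\ \forall t\in\mathbb{I}\}$. *)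

theory Defs
  imports "HOL-Analysis.Analysis"
begin

definition copula :: "(real \<Rightarrow> real \<Rightarrow> real) \<Rightarrow> bool" where
  "copula C \<longleftrightarrow>
     (\<forall>x\<in>{0..1}. \<forall>y\<in>{0..1}. C x y \<in> {0..1}) \<and>
     (\<forall>x\<in>{0..1}. C x 0 = 0 \<and> C 0 x = 0 \<and> C x 1 = x \<and> C 1 x = x) \<and>
     (\<forall>a\<in>{0..1}. \<forall>b\<in>{0..1}. \<forall>c\<in>{0..1}. \<forall>d\<in>{0..1}.
        a \<le> b \<longrightarrow> c \<le> d \<longrightarrow> C b d + C a c - C b c - C a d \<ge> 0)"

definition diagonal_section :: "(real \<Rightarrow> real) \<Rightarrow> bool" where
  "diagonal_section \<delta> \<longleftrightarrow>
     (\<forall>x\<in>{0..1}. \<delta> x \<in> {0..1} \<and> \<delta> x \<le> x) \<and>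
     (\<forall>x\<in>{0..1}. \<forall>y\<in>{0..1}. x \<le> y \<longrightarrow> 0 \<le> \<delta> y - \<delta> x \<and> \<delta> y - \<delta> x \<le> 2 * (y - x)) \<and>
     \<delta> 1 = 1"

definition delta_hat :: "(real \<Rightarrow> real) \<Rightarrow> real \<Rightarrow> real" where
  "delta_hat \<delta> x = x - \<delta> x"

definition total_variation :: "(real \<Rightarrow> real) \<Rightarrow> real \<Rightarrow> real \<Rightarrow> real" where
  "total_variation f x y =
     Sup {(\<Sum>i<n. \<bar>f (t (Suc i)) - f (t i)\<bar>) | n t.
            t 0 = x \<and> t n = y \<and> (\<forall>i<n. t i \<le> t (Suc i))}"

definition upper_copula :: "(real \<Rightarrow> real) \<Rightarrow> real \<Rightarrow> real \<Rightarrow> real" where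
  "upper_copula \<delta> x y =
     Sup {C x y | C. copula C \<and> (\<forall>t\<in>{0..1}. C t t = \<delta> t)}"

end

theory Submission
  imports Defs
begin

text \<open>Write \<open>h = delta_hat \<delta>\<close>. For a copula \<open>C\<close> with diagonal \<open>\<delta>\<close>, the 2-increasing
  property on the rectangles \<open>[p,q]\<times>[q,r]\<close>, \<open>[q,r]\<times>[0,r]\<close> and \<open>[q,1]\<times>[q,r]\<close> shows that
  \<open>\<phi>(p,r) = 2r - 2C(p,r) - h(p) - h(r)\<close> is superadditive along chains \<open>p \<le> q \<le> r\<close> and
  dominates \<open>|h(r) - h(q)|\<close>; summing over a partition of \<open>[x,y]\<close> bounds the total variation
  of \<open>h\<close> on \<open>[x,y]\<close> by \<open>\<phi>(x,y)\<close>, which is the upper bound.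
  The bound is attained: if \<open>N(u)\<close> is the negative variation of \<open>h\<close> on \<open>[0,u]\<close>, then \<open>N\<close> and
  \<open>\<delta> - N\<close> are nondecreasing and 1-Lipschitz, so \<open>min(u, v, N(u) + \<delta>(v) - N(v))\<close> is a copula
  with diagonal \<open>\<delta>\<close>; by additivity of the variation it equals the bound for \<open>u \<le> v\<close>, and
  its transpose covers \<open>u > v\<close>.\<close>

section \<open>Total variation\<close>

definition is_partition :: "real \<Rightarrow> real \<Rightarrow> nat \<Rightarrow> (nat \<Rightarrow> real) \<Rightarrow> bool" where
  "is_partition x y n t \<longleftrightarrow> t 0 = x \<and> t n = y \<and> (\<forall>i<n. t i \<le> t (Suc i))"

definition variation_sum :: "(real \<Rightarrow> real) \<Rightarrow> nat \<Rightarrow> (nat \<Rightarrow> real) \<Rightarrow> real" where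
  "variation_sum f n t = (\<Sum>i<n. \<bar>f (t (Suc i)) - f (t i)\<bar>)"

definition variation_sums :: "(real \<Rightarrow> real) \<Rightarrow> real \<Rightarrow> real \<Rightarrow> real set" where
  "variation_sums f x y = {variation_sum f n t | n t. is_partition x y n t}"

lemma total_variation_eq_Sup: "total_variation f x y = Sup (variation_sums f x y)"
  unfolding total_variation_def variation_sums_def variation_sum_def is_partition_def by simp

lemma variation_sum_Suc:
  "variation_sum f (Suc n) t = variation_sum f n t + \<bar>f (t (Suc n)) - f (t n)\<bar>"
  by (simp add: variation_sum_def)

lemma is_partition_mono:
  assumes "is_partition x y n t" "i \<le> j" "j \<le> n"
  shows "t i \<le> t j"
  using assms(2,3)
proof (induction j rule: dec_induct)
  case (step k)
  then show ?case
    using assms(1) unfolding is_partition_def by (meson Suc_le_lessD Suc_leD order_trans)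
qed simp

lemma is_partition_bounds:
  assumes "is_partition x y n t" "i \<le> n"
  shows "x \<le> t i" "t i \<le> y"
  using is_partition_mono[OF assms(1), of 0 i] is_partition_mono[OF assms(1), of i n] assms
  unfolding is_partition_def by auto

lemma abs_diff_in_variation_sums: "x \<le> y \<Longrightarrow> \<bar>f y - f x\<bar> \<in> variation_sums f x y"
  unfolding variation_sums_def
  by (rule CollectI, rule exI[of _ 1], rule exI[of _ "\<lambda>i. if i = 0 then x else y"])
    (simp add: is_partition_def variation_sum_def)

lemma variation_sum_append:
  assumes "p n = q 0"
  shows "variation_sum f (n + m) (\<lambda>i. if i \<le> n then p i else q (i - n))
    = variation_sum f n p + variation_sum f m q"
proof (induction m)
  case 0
  then show ?case by (simp add: variation_sum_def)
next
  case (Suc m)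
  then show ?case
    using assms by (simp add: variation_sum_Suc Suc_diff_le algebra_simps)
qed

lemma is_partition_append:
  assumes "is_partition x s n p" "is_partition s y m q"
  shows "is_partition x y (n + m) (\<lambda>i. if i \<le> n then p i else q (i - n))"
  using assms unfolding is_partition_def
  by (auto simp: Suc_diff_le not_le less_Suc_eq_le)

lemma variation_sum_le_lipschitz:
  assumes "L-lipschitz_on {a..b} f" "a \<le> x" "y \<le> b" "is_partition x y n t"
  shows "variation_sum f n t \<le> L * (y - x)"
proof -
  have "variation_sum f n t \<le> (\<Sum>i<n. L * (t (Suc i) - t i))"
    unfolding variation_sum_def
  proof (rule sum_mono)
    fix i assume "i \<in> {..<n}"
    then have "x \<le> t i" "t i \<le> t (Suc i)" "t (Suc i) \<le> y"
      using is_partition_bounds[OF assms(4)] assms(4) by (auto simp: is_partition_def)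
    then show "\<bar>f (t (Suc i)) - f (t i)\<bar> \<le> L * (t (Suc i) - t i)"
      using lipschitz_onD[OF assms(1), of "t (Suc i)" "t i"] assms(2,3) by (simp add: dist_real_def)
  qed
  also have "\<dots> = L * (y - x)"
    using assms(4) by (simp add: sum_distrib_left[symmetric] sum_lessThan_telescope is_partition_def)
  finally show ?thesis .
qed

lemma bdd_above_variation_sums:
  "L-lipschitz_on {a..b} f \<Longrightarrow> a \<le> x \<Longrightarrow> y \<le> b \<Longrightarrow> bdd_above (variation_sums f x y)"
  unfolding variation_sums_def bdd_above_def using variation_sum_le_lipschitz by blast

lemma variation_sum_le_total_variation:
  assumes "L-lipschitz_on {a..b} f" "a \<le> x" "y \<le> b" "is_partition x y n t"
  shows "variation_sum f n t \<le> total_variation f x y"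
  unfolding total_variation_eq_Sup using assms
  by (intro cSup_upper bdd_above_variation_sums) (auto simp: variation_sums_def)

lemma abs_diff_le_total_variation:
  assumes "L-lipschitz_on {a..b} f" "a \<le> x" "x \<le> y" "y \<le> b"
  shows "\<bar>f y - f x\<bar> \<le> total_variation f x y"
  unfolding total_variation_eq_Sup using assms
  by (intro cSup_upper bdd_above_variation_sums abs_diff_in_variation_sums)

lemma total_variation_le_lipschitz:
  assumes "L-lipschitz_on {a..b} f" "a \<le> x" "x \<le> y" "y \<le> b"
  shows "total_variation f x y \<le> L * (y - x)"
  unfolding total_variation_eq_Sup
proof (rule cSup_least)
  show "variation_sums f x y \<noteq> {}" using abs_diff_in_variation_sums[OF assms(3)] by blast
qed (use assms in \<open>auto simp: variation_sums_def intro: variation_sum_le_lipschitz\<close>)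

lemma abs_diff_le_split:
  fixes f :: "real \<Rightarrow> real"
  assumes "q \<le> r"
  shows "\<bar>f r - f q\<bar> \<le> \<bar>f (min s r) - f (min s q)\<bar> + \<bar>f (max s r) - f (max s q)\<bar>"
  using assms by (cases "r \<le> s"; cases "q \<le> s") (auto simp: min_def max_def)

lemma total_variation_add:
  assumes "L-lipschitz_on {a..b} f" "a \<le> x" "x \<le> s" "s \<le> y" "y \<le> b"
  shows "total_variation f x y = total_variation f x s + total_variation f s y"
proof (rule antisym)
  show "total_variation f x y \<le> total_variation f x s + total_variation f s y"
    unfolding total_variation_eq_Sup[of f x y]
  proof (rule cSup_least)
    show "variation_sums f x y \<noteq> {}"
      using abs_diff_in_variation_sums assms(3,4) by (metis empty_iff order_trans)
  next
    fix z assume "z \<in> variation_sums f x y"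
    then obtain n p where z: "z = variation_sum f n p" and p: "is_partition x y n p"
      unfolding variation_sums_def by blast
    have "is_partition x s n (\<lambda>i. min s (p i))" "is_partition s y n (\<lambda>i. max s (p i))"
      using p assms unfolding is_partition_def by (auto intro: min.mono max.mono)
    then have "variation_sum f n (\<lambda>i. min s (p i)) + variation_sum f n (\<lambda>i. max s (p i))
        \<le> total_variation f x s + total_variation f s y"
      using assms by (intro add_mono variation_sum_le_total_variation[OF assms(1)]) auto
    moreover have "variation_sum f n p
        \<le> variation_sum f n (\<lambda>i. min s (p i)) + variation_sum f n (\<lambda>i. max s (p i))"
      unfolding variation_sum_def sum.distrib[symmetric]
      using p by (intro sum_mono abs_diff_le_split) (auto simp: is_partition_def)
    ultimately show "z \<le> total_variation f x s + total_variation f s y"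
      using z by linarith
  qed
next
  have glue: "variation_sum f n p + variation_sum f m q \<le> total_variation f x y"
    if p: "is_partition x s n p" and q: "is_partition s y m q" for n p m q
  proof -
    let ?r = "\<lambda>i. if i \<le> n then p i else q (i - n)"
    have "variation_sum f (n + m) ?r = variation_sum f n p + variation_sum f m q"
      using p q by (intro variation_sum_append) (simp add: is_partition_def)
    moreover have "variation_sum f (n + m) ?r \<le> total_variation f x y"
      using is_partition_append[OF p q] assms by (intro variation_sum_le_total_variation) auto
    ultimately show ?thesis by simp
  qed
  have "total_variation f s y \<le> total_variation f x y - variation_sum f n p"
    if "is_partition x s n p" for n p
    unfolding total_variation_eq_Sup[of f s y]
  proof (rule cSup_least)
    show "variation_sums f s y \<noteq> {}" using abs_diff_in_variation_sums[OF assms(4)] by blast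
  qed (use glue[OF that] in \<open>fastforce simp: variation_sums_def\<close>)
  then have "total_variation f x s \<le> total_variation f x y - total_variation f s y"
    unfolding total_variation_eq_Sup[of f x s]
  proof (intro cSup_least)
    show "variation_sums f x s \<noteq> {}" using abs_diff_in_variation_sums[OF assms(3)] by blast
  qed (fastforce simp: variation_sums_def)
  then show "total_variation f x s + total_variation f s y \<le> total_variation f x y"
    by simp
qed

lemma total_variation_le_superadditive:
  assumes "x \<le> y"
    and dominates: "\<And>q r. x \<le> q \<Longrightarrow> q \<le> r \<Longrightarrow> r \<le> y \<Longrightarrow> \<bar>f r - f q\<bar> \<le> \<phi> q r"
    and superadditive: "\<And>p q r. x \<le> p \<Longrightarrow> p \<le> q \<Longrightarrow> q \<le> r \<Longrightarrow> r \<le> y \<Longrightarrow>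
      \<phi> p q + \<phi> q r \<le> \<phi> p r"
  shows "total_variation f x y \<le> \<phi> x y"
  unfolding total_variation_eq_Sup
proof (rule cSup_least)
  show "variation_sums f x y \<noteq> {}" using abs_diff_in_variation_sums[OF assms(1)] by blast
next
  fix z assume "z \<in> variation_sums f x y"
  then obtain n t where z: "z = variation_sum f n t" and t: "is_partition x y n t"
    unfolding variation_sums_def by blast
  have partial: "m \<le> n \<Longrightarrow> variation_sum f m t \<le> \<phi> x (t m)" for m
  proof (induction m)
    case 0
    then show ?case using dominates[of x x] assms(1) t by (simp add: variation_sum_def is_partition_def)
  next
    case (Suc m)
    have "x \<le> t m" "t m \<le> t (Suc m)" "t (Suc m) \<le> y"
      using is_partition_bounds[OF t] t Suc.prems by (auto simp: is_partition_def)
    then show ?case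
      using Suc dominates[of "t m" "t (Suc m)"] superadditive[of x "t m" "t (Suc m)"] t
      by (simp add: variation_sum_Suc is_partition_def)
  qed
  show "z \<le> \<phi> x y" using partial[OF order_refl] z t by (simp add: is_partition_def)
qed

section \<open>Copulas and diagonal sections\<close>

lemma copula_rectangle_nonneg:
  assumes "copula C" "a \<in> {0..1}" "b \<in> {0..1}" "c \<in> {0..1}" "d \<in> {0..1}" "a \<le> b" "c \<le> d"
  shows "0 \<le> C b d + C a c - C b c - C a d"
  using assms unfolding copula_def by blast

lemma copula_boundary:
  assumes "copula C" "u \<in> {0..1}"
  shows "C u 0 = 0" "C 0 u = 0" "C u 1 = u" "C 1 u = u"
  using assms unfolding copula_def by blast+

lemma copula_le:
  assumes "copula C" "u \<in> {0..1}" "v \<in> {0..1}"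
  shows "C u v \<le> u" "C u v \<le> v"
proof -
  have "0 \<le> C u 1 + C 0 v - C u v - C 0 1"
    using copula_rectangle_nonneg[OF assms(1), of 0 u v 1] assms by auto
  then show "C u v \<le> u" using copula_boundary[OF assms(1)] assms by simp
  have "0 \<le> C 1 v + C u 0 - C 1 0 - C u v"
    using copula_rectangle_nonneg[OF assms(1), of u 1 0 v] assms by auto
  then show "C u v \<le> v" using copula_boundary[OF assms(1)] assms by simp
qed

lemma copula_swap: "copula C \<Longrightarrow> copula (\<lambda>u v. C v u)"
  unfolding copula_def by (simp add: algebra_simps)

lemma diagonal_section_le: "diagonal_section \<delta> \<Longrightarrow> t \<in> {0..1} \<Longrightarrow> \<delta> t \<le> t"
  unfolding diagonal_section_def by blast

lemma diagonal_section_increment: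
  assumes "diagonal_section \<delta>" "0 \<le> s" "s \<le> t" "t \<le> 1"
  shows "\<delta> s \<le> \<delta> t" "\<delta> t - \<delta> s \<le> 2 * (t - s)"
  using assms unfolding diagonal_section_def by auto

lemma diagonal_section_endpoints:
  assumes "diagonal_section \<delta>"
  shows "\<delta> 0 = 0" "\<delta> 1 = 1"
  using assms unfolding diagonal_section_def by force+

lemma delta_hat_lipschitz:
  assumes "diagonal_section \<delta>"
  shows "1-lipschitz_on {0..1} (delta_hat \<delta>)"
proof (rule lipschitz_onI)
  have "\<bar>delta_hat \<delta> t - delta_hat \<delta> s\<bar> \<le> t - s" if "s \<in> {0..1}" "t \<in> {0..1}" "s \<le> t" for s t
    using diagonal_section_increment[OF assms, of s t] that unfolding delta_hat_def by auto
  then show "dist (delta_hat \<delta> s) (delta_hat \<delta> t) \<le> 1 * dist s t"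
    if "s \<in> {0..1}" "t \<in> {0..1}" for s t
    using that by (cases "s \<le> t") (force simp: dist_real_def)+
qed simp

section \<open>The upper bound\<close>

context
  fixes C :: "real \<Rightarrow> real \<Rightarrow> real" and \<delta> :: "real \<Rightarrow> real"
  assumes copula: "copula C" and diagonal: "\<forall>t\<in>{0..1}. C t t = \<delta> t"
begin

lemma copula_diag_rectangle:
  assumes "0 \<le> p" "p \<le> q" "q \<le> r" "r \<le> 1"
  shows "C p r \<le> C q r + C p q - \<delta> q"
  using copula_rectangle_nonneg[OF copula, of p q q r] diagonal assms by auto

lemma copula_diag_max_delta_hat:
  assumes "0 \<le> q" "q \<le> r" "r \<le> 1"
  shows "delta_hat \<delta> q + delta_hat \<delta> r + \<bar>delta_hat \<delta> r - delta_hat \<delta> q\<bar> \<le> 2 * (r - C q r)"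
proof -
  have "0 \<le> C r r + C q 0 - C r 0 - C q r"
    using copula_rectangle_nonneg[OF copula, of q r 0 r] assms by auto
  then have "C q r \<le> \<delta> r" using copula_boundary[OF copula] diagonal assms by auto
  moreover have "0 \<le> C 1 r + C q q - C 1 q - C q r"
    using copula_rectangle_nonneg[OF copula, of q 1 q r] assms by auto
  then have "C q r \<le> r - q + \<delta> q" using copula_boundary[OF copula] diagonal assms by auto
  ultimately show ?thesis unfolding delta_hat_def by (simp add: abs_if)
qed

lemma copula_diag_upper_bound:
  assumes "0 \<le> x" "x \<le> y" "y \<le> 1"
  shows "C x y \<le> y - (delta_hat \<delta> x + delta_hat \<delta> y + total_variation (delta_hat \<delta>) x y) / 2"
proof -
  define \<phi> where "\<phi> p r = 2 * r - 2 * C p r - delta_hat \<delta> p - delta_hat \<delta> r" for p r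
  have "total_variation (delta_hat \<delta>) x y \<le> \<phi> x y"
  proof (rule total_variation_le_superadditive[OF assms(2)])
    show "\<bar>delta_hat \<delta> r - delta_hat \<delta> q\<bar> \<le> \<phi> q r" if "x \<le> q" "q \<le> r" "r \<le> y" for q r
      using copula_diag_max_delta_hat[of q r] that assms unfolding \<phi>_def by auto
    show "\<phi> p q + \<phi> q r \<le> \<phi> p r" if "x \<le> p" "p \<le> q" "q \<le> r" "r \<le> y" for p q r
      using copula_diag_rectangle[of p q r] that assms unfolding \<phi>_def delta_hat_def by auto
  qed
  then show ?thesis unfolding \<phi>_def by (simp add: field_simps)
qed

end

definition diag_upper_bound :: "(real \<Rightarrow> real) \<Rightarrow> real \<Rightarrow> real \<Rightarrow> real" where
  "diag_upper_bound \<delta> x y = min x (min y (max x y - (delta_hat \<delta> x + delta_hat \<delta> y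
     + total_variation (delta_hat \<delta>) (min x y) (max x y)) / 2))"

lemma diag_upper_bound_commute: "diag_upper_bound \<delta> x y = diag_upper_bound \<delta> y x"
  unfolding diag_upper_bound_def by (simp add: min.commute max.commute min.left_commute add.commute)

lemma diag_upper_bound_le:
  assumes "x \<le> y"
  shows "diag_upper_bound \<delta> x y = min x (min y (y - (delta_hat \<delta> x + delta_hat \<delta> y
     + total_variation (delta_hat \<delta>) x y) / 2))"
  using assms unfolding diag_upper_bound_def by (simp add: min_absorb1 max_absorb2)

lemma copula_le_diag_upper_bound:
  assumes "copula C" "\<forall>t\<in>{0..1}. C t t = \<delta> t" "x \<in> {0..1}" "y \<in> {0..1}"
  shows "C x y \<le> diag_upper_bound \<delta> x y"
proof -
  have ordered: "D u v \<le> diag_upper_bound \<delta> u v"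
    if "copula D" "\<forall>t\<in>{0..1}. D t t = \<delta> t" "u \<in> {0..1}" "v \<in> {0..1}" "u \<le> v" for D u v
    using copula_diag_upper_bound[OF that(1,2), of u v] copula_le[OF that(1,3,4)] that(3-5)
    by (simp add: diag_upper_bound_le)
  show ?thesis
  proof (cases "x \<le> y")
    case False
    then show ?thesis
      using ordered[OF copula_swap[OF assms(1)], of y x] assms diag_upper_bound_commute by auto
  qed (use ordered assms in blast)
qed

section \<open>The extremal copula\<close>

definition negative_variation :: "(real \<Rightarrow> real) \<Rightarrow> real \<Rightarrow> real \<Rightarrow> real" where
  "negative_variation f a u = (total_variation f a u - (f u - f a)) / 2"

lemma negative_variation_diff:
  assumes "L-lipschitz_on {a..b} f" "a \<le> s" "s \<le> t" "t \<le> b"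
  shows "negative_variation f a t - negative_variation f a s
    = (total_variation f s t - (f t - f s)) / 2"
  using total_variation_add[OF assms(1) order_refl assms(2,3,4)] assms
  unfolding negative_variation_def by (simp add: field_simps)

lemma min_sum_rectangle_nonneg:
  fixes a b c d Fa Fb Gc Gd :: real
  assumes "a \<le> b" "c \<le> d" "Fa \<le> Fb" "Fb - Fa \<le> b - a" "Gc \<le> Gd" "Gd - Gc \<le> d - c"
  shows "0 \<le> min b (min d (Fb + Gd)) + min a (min c (Fa + Gc))
    - min b (min c (Fb + Gc)) - min a (min d (Fa + Gd))"
  using assms by (smt (verit))

lemma copula_min_sum:
  fixes F G :: "real \<Rightarrow> real"
  assumes F: "\<And>s t. 0 \<le> s \<Longrightarrow> s \<le> t \<Longrightarrow> t \<le> 1 \<Longrightarrow> F s \<le> F t \<and> F t - F s \<le> t - s"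
    and G: "\<And>s t. 0 \<le> s \<Longrightarrow> s \<le> t \<Longrightarrow> t \<le> 1 \<Longrightarrow> G s \<le> G t \<and> G t - G s \<le> t - s"
    and "0 \<le> F 0 + G 0" "1 \<le> F 1 + G 1"
  shows "copula (\<lambda>u v. min u (min v (F u + G v)))"
  unfolding copula_def
proof (intro conjI ballI impI)
  fix u v :: real assume "u \<in> {0..1}" "v \<in> {0..1}"
  then show "min u (min v (F u + G v)) \<in> {0..1}"
    using F[of 0 u] G[of 0 v] assms(3) by auto
next
  fix u :: real assume u: "u \<in> {0..1}"
  show "min u (min 0 (F u + G 0)) = 0" "min 0 (min u (F 0 + G u)) = 0"
    using F[of 0 u] G[of 0 u] u assms(3) by auto
  show "min u (min 1 (F u + G 1)) = u" "min 1 (min u (F 1 + G u)) = u"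
    using F[of u 1] G[of u 1] u assms(4) by auto
next
  fix a b c d :: real
  assume "a \<in> {0..1}" "b \<in> {0..1}" "c \<in> {0..1}" "d \<in> {0..1}" "a \<le> b" "c \<le> d"
  then show "0 \<le> min b (min d (F b + G d)) + min a (min c (F a + G c))
      - min b (min c (F b + G c)) - min a (min d (F a + G d))"
    using F[of a b] G[of c d] by (intro min_sum_rectangle_nonneg) auto
qed

definition extremal_copula :: "(real \<Rightarrow> real) \<Rightarrow> real \<Rightarrow> real \<Rightarrow> real" where
  "extremal_copula \<delta> u v = min u (min v (negative_variation (delta_hat \<delta>) 0 u
     + (\<delta> v - negative_variation (delta_hat \<delta>) 0 v)))"

context
  fixes \<delta> :: "real \<Rightarrow> real"
  assumes diagonal: "diagonal_section \<delta>"
begin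

lemma negative_variation_delta_hat_increment:
  assumes "0 \<le> s" "s \<le> t" "t \<le> 1"
  defines "N \<equiv> negative_variation (delta_hat \<delta>) 0"
  shows "N s \<le> N t" "N t - N s \<le> t - s"
    "\<delta> t - N t - (\<delta> s - N s) \<le> t - s" "\<delta> s - N s \<le> \<delta> t - N t"
proof -
  note lip = delta_hat_lipschitz[OF diagonal]
  let ?V = "total_variation (delta_hat \<delta>) s t"
  have diff: "2 * (N t - N s) = ?V - (delta_hat \<delta> t - delta_hat \<delta> s)"
    unfolding N_def using negative_variation_diff[OF lip assms(1-3)] by simp
  have "\<bar>delta_hat \<delta> t - delta_hat \<delta> s\<bar> \<le> ?V"
    using abs_diff_le_total_variation[OF lip assms(1-3)] .
  then have V: "delta_hat \<delta> t - delta_hat \<delta> s \<le> ?V" "delta_hat \<delta> s - delta_hat \<delta> t \<le> ?V"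
    by (simp_all add: abs_le_iff)
  have V_le: "?V \<le> t - s"
    using total_variation_le_lipschitz[OF lip assms(1-3)] by simp
  have hat: "delta_hat \<delta> t - delta_hat \<delta> s = (t - s) - (\<delta> t - \<delta> s)"
    by (simp add: delta_hat_def)
  note inc = diagonal_section_increment[OF diagonal assms(1-3)]
  show "N s \<le> N t" using diff V by argo
  show "N t - N s \<le> t - s" using diff V_le hat inc by argo
  show "\<delta> t - N t - (\<delta> s - N s) \<le> t - s" using diff V hat by argo
  show "\<delta> s - N s \<le> \<delta> t - N t" using diff V_le hat inc by argo
qed

lemma extremal_copula: "copula (extremal_copula \<delta>)"
  unfolding extremal_copula_def
  by (rule copula_min_sum)
    (simp_all add: negative_variation_delta_hat_increment diagonal_section_endpoints[OF diagonal])

lemma extremal_copula_diagonal: "t \<in> {0..1} \<Longrightarrow> extremal_copula \<delta> t t = \<delta> t"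
  using diagonal_section_le[OF diagonal] unfolding extremal_copula_def by simp

lemma extremal_copula_eq_diag_upper_bound:
  assumes "0 \<le> x" "x \<le> y" "y \<le> 1"
  shows "extremal_copula \<delta> x y = diag_upper_bound \<delta> x y"
proof -
  let ?N = "negative_variation (delta_hat \<delta>) 0"
  have "2 * (?N y - ?N x) = total_variation (delta_hat \<delta>) x y - (delta_hat \<delta> y - delta_hat \<delta> x)"
    using negative_variation_diff[OF delta_hat_lipschitz[OF diagonal] assms] by simp
  then have "?N x + (\<delta> y - ?N y)
      = y - (delta_hat \<delta> x + delta_hat \<delta> y + total_variation (delta_hat \<delta>) x y) / 2"
    unfolding delta_hat_def by (simp add: field_simps)
  then show ?thesis unfolding extremal_copula_def diag_upper_bound_le[OF assms(2)] by simp
qed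

lemma diag_upper_bound_attained:
  assumes "x \<in> {0..1}" "y \<in> {0..1}"
  shows "\<exists>C. copula C \<and> (\<forall>t\<in>{0..1}. C t t = \<delta> t) \<and> C x y = diag_upper_bound \<delta> x y"
proof (cases "x \<le> y")
  case True
  then show ?thesis
    using extremal_copula extremal_copula_diagonal extremal_copula_eq_diag_upper_bound assms
    by (intro exI[of _ "extremal_copula \<delta>"]) auto
next
  case False
  then show ?thesis
    using copula_swap[OF extremal_copula] extremal_copula_diagonal
      extremal_copula_eq_diag_upper_bound[of y x] diag_upper_bound_commute assms
    by (intro exI[of _ "\<lambda>u v. extremal_copula \<delta> v u"]) auto
qed

end

theorem theorem3p6:
  fixes \<delta> :: "real \<Rightarrow> real" and x y :: real
  assumes "diagonal_section \<delta>" and "x \<in> {0..1}" and "y \<in> {0..1}"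
  shows "upper_copula \<delta> x y =
    min x (min y (max x y - (delta_hat \<delta> x + delta_hat \<delta> y
        + total_variation (delta_hat \<delta>) (min x y) (max x y)) / 2))"
proof -
  let ?S = "{C x y | C. copula C \<and> (\<forall>t\<in>{0..1}. C t t = \<delta> t)}"
  have "Sup ?S = diag_upper_bound \<delta> x y"
  proof (rule cSup_eq_maximum)
    obtain C where "copula C" "\<forall>t\<in>{0..1}. C t t = \<delta> t" "C x y = diag_upper_bound \<delta> x y"
      using diag_upper_bound_attained[OF assms] by blast
    then show "diag_upper_bound \<delta> x y \<in> ?S"
      by (intro CollectI exI[of _ C]) simp
    show "z \<le> diag_upper_bound \<delta> x y" if "z \<in> ?S" for z
    proof -
      obtain C where "z = C x y" "copula C" "\<forall>t\<in>{0..1}. C t t = \<delta> t"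
        using \<open>z \<in> ?S\<close> by blast
      then show ?thesis using copula_le_diag_upper_bound[of C \<delta> x y] assms(2,3) by simp
    qed
  qed
  then show ?thesis unfolding upper_copula_def diag_upper_bound_def .
qed

end
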